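(* For each $n\geq2$, the pseudovariety $\llbracket N_n\rrbracket$ is join irreducible and $\operatorname{Excl}(N_n)=\llbracket x^{\omega+n-1}\approx x^{n-1}\rrbracket$.
   Context: $N_n=\langle a\mid a^n=0\rangle=\{0,a,\dots,a^{n-1}\}$ is the monogenic nilpotent semigroup of order $n$. A pseudovariety is a class of finite semigroups closed under finite direct products, subsemigroups and homomorphic images; $\llbracket S\rrbracket$ is the pseudovariety generated by $S$ and $\llbracket\Sigma\rrbracket$ the pseudovariety defined by pseudoidentities $\Sigma$; $x^\omega$ is the idempotent power and $x^{\omega+k}=x^\omega x^k$. A pseudovariety $\mathbf{V}$ is join irreducible if for every set $\mathscr{X}$ of pseudovarieties, $\mathbf{V}\subseteq\bigvee\mathscr{X}$ implies $\mathbf{V}\subseteq\mathbf{X}$ for some $\mathbf{X}\in\mathscr{X}$; $\operatorname{Excl}(S)$ is the class of finite semigroups $T$ with $S\notin\llbracket T\rrbracket$. *)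

theory Defs
  imports Main "HOL-Library.Nat_Bijection"
begin

text \<open>Finite semigroups are represented with carriers that are subsets of nat
(every finite semigroup is isomorphic to such one). Pseudovarieties are closed under homomorphic images,
hence under isomorphism, so this representation loses nothing.\<close>

type_synonym sgr = "nat set \<times> (nat \<Rightarrow> nat \<Rightarrow> nat)"

definition carr :: "sgr \<Rightarrow> nat set" where "carr S = fst S"
definition mul :: "sgr \<Rightarrow> nat \<Rightarrow> nat \<Rightarrow> nat" where "mul S = snd S"

definition fsg :: "sgr \<Rightarrow> bool" where
  "fsg S \<longleftrightarrow> finite (carr S) \<and> carr S \<noteq> {}
     \<and> (\<forall>x\<in>carr S. \<forall>y\<in>carr S. mul S x y \<in> carr S)
     \<and> (\<forall>x\<in>carr S. \<forall>y\<in>carr S. \<forall>z\<in>carr S. mul S (mul S x y) z = mul S x (mul S y z))"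

definition subsgr :: "sgr \<Rightarrow> sgr \<Rightarrow> bool" where
  "subsgr T S \<longleftrightarrow> fsg T \<and> carr T \<subseteq> carr S
     \<and> (\<forall>x\<in>carr T. \<forall>y\<in>carr T. mul T x y = mul S x y)"

definition hom_image :: "sgr \<Rightarrow> sgr \<Rightarrow> bool" where
  "hom_image T S \<longleftrightarrow> fsg T \<and> (\<exists>h. h ` carr S = carr T
     \<and> (\<forall>x\<in>carr S. \<forall>y\<in>carr S. h (mul S x y) = mul T (h x) (h y)))"

definition dprod :: "sgr \<Rightarrow> sgr \<Rightarrow> sgr" where
  "dprod S T = ((\<lambda>(a,b). prod_encode (a,b)) ` (carr S \<times> carr T),
     (\<lambda>p q. prod_encode (mul S (fst (prod_decode p)) (fst (prod_decode q)),
                         mul T (snd (prod_decode p)) (snd (prod_decode q)))))"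

text \<open>Trivial semigroup (empty direct product).\<close>
definition trivial_sgr :: sgr where "trivial_sgr = ({0}, \<lambda>_ _. 0)"

definition pseudovariety :: "sgr set \<Rightarrow> bool" where
  "pseudovariety V \<longleftrightarrow> V \<subseteq> {S. fsg S} \<and> trivial_sgr \<in> V
     \<and> (\<forall>S\<in>V. \<forall>T\<in>V. dprod S T \<in> V)
     \<and> (\<forall>S\<in>V. \<forall>T. subsgr T S \<longrightarrow> T \<in> V)
     \<and> (\<forall>S\<in>V. \<forall>T. hom_image T S \<longrightarrow> T \<in> V)"

definition gen_pv :: "sgr \<Rightarrow> sgr set" where
  "gen_pv S = \<Inter> {V. pseudovariety V \<and> S \<in> V}"

definition join_pv :: "sgr set set \<Rightarrow> sgr set" where
  "join_pv X = \<Inter> {V. pseudovariety V \<and> \<Union> X \<subseteq> V}"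

definition join_irreducible :: "sgr set \<Rightarrow> bool" where
  "join_irreducible V \<longleftrightarrow> (\<forall>X. (\<forall>W\<in>X. pseudovariety W) \<longrightarrow> V \<subseteq> join_pv X
      \<longrightarrow> (\<exists>W\<in>X. V \<subseteq> W))"

definition Excl :: "sgr \<Rightarrow> sgr set" where
  "Excl S = {T. fsg T \<and> S \<notin> gen_pv T}"

text \<open>Positive powers s^k (k \<ge> 1): spow S s k = s^(k+1).\<close>
primrec spow :: "sgr \<Rightarrow> nat \<Rightarrow> nat \<Rightarrow> nat" where
  "spow S s 0 = s"
| "spow S s (Suc k) = mul S (spow S s k) s"

definition pow :: "sgr \<Rightarrow> nat \<Rightarrow> nat \<Rightarrow> nat" where
  "pow S s k = spow S s (k - 1)"

definition omega_pow :: "sgr \<Rightarrow> nat \<Rightarrow> nat" where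
  "omega_pow S s = (THE e. mul S e e = e \<and> (\<exists>k\<ge>1. e = pow S s k))"

definition pv_omega_plus :: "nat \<Rightarrow> sgr set" where
  "pv_omega_plus m = {S. fsg S \<and>
     (\<forall>s\<in>carr S. mul S (omega_pow S s) (pow S s m) = pow S s m)}"

text \<open>N_n = <a | a^n = 0>: element 0 is the zero, element i (1 \<le> i < n) is a^i.\<close>
definition N :: "nat \<Rightarrow> sgr" where
  "N n = ({0..<n}, \<lambda>i j. if i = 0 \<or> j = 0 \<or> i + j \<ge> n then 0 else i + j)"

end

theory Submission
  imports Defs
begin

text \<open>If some power \<open>s\<^sup>n\<^sup>-\<^sup>1\<close> of an element of \<open>T\<close> does not lie in the cyclic part
of \<open>\<langle>s\<rangle>\<close>, the powers \<open>s, \<dots>, s\<^sup>n\<^sup>-\<^sup>1\<close> are pairwise distinct and do not recur, so the Rees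
quotient of \<open>\<langle>s\<rangle>\<close> by its ideal \<open>{s\<^sup>k | k \<ge> n}\<close> is \<open>N\<^sub>n\<close>; hence \<open>N\<^sub>n \<in> \<lbrakk>T\<rbrakk>\<close>. Conversely,
the pseudovariety \<open>\<lbrakk>x\<^sup>\<omega>\<^sup>+\<^sup>n\<^sup>-\<^sup>1 \<approx> x\<^sup>n\<^sup>-\<^sup>1\<rbrakk>\<close> does not contain \<open>N\<^sub>n\<close>, where \<open>a\<^sup>n\<^sup>-\<^sup>1\<close> never
recurs. So \<open>Excl(N\<^sub>n)\<close> is this pseudovariety, and any semigroup \<open>S\<close> whose exclusion class
is a pseudovariety generates a join irreducible pseudovariety: a join of pseudovarieties
avoiding \<open>S\<close> stays inside \<open>Excl(S)\<close>.\<close>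

lemma spow_in_carr: "fsg S \<Longrightarrow> s \<in> carr S \<Longrightarrow> spow S s k \<in> carr S"
  by (induction k) (auto simp: fsg_def)

lemma spow_add:
  assumes "fsg S" "s \<in> carr S"
  shows "mul S (spow S s a) (spow S s b) = spow S s (a + b + 1)"
proof (induction b)
  case 0
  then show ?case by simp
next
  case (Suc b)
  have "mul S (spow S s a) (spow S s (Suc b)) = mul S (mul S (spow S s a) (spow S s b)) s"
    using assms spow_in_carr[OF assms] by (simp add: fsg_def)
  with Suc show ?case by simp
qed

lemma spow_spow:
  assumes "fsg S" "s \<in> carr S"
  shows "spow S (spow S s a) b = spow S s ((a + 1) * (b + 1) - 1)"
proof (induction b)
  case 0
  then show ?case by simp
next
  case (Suc b)
  have "spow S (spow S s a) (Suc b) = mul S (spow S s ((a + 1) * (b + 1) - 1)) (spow S s a)"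
    using Suc by simp
  also have "\<dots> = spow S s ((a + 1) * (b + 1) - 1 + a + 1)"
    using spow_add[OF assms] by simp
  also have "(a + 1) * (b + 1) - 1 + a + 1 = (a + 1) * (Suc b + 1) - 1"
    by (simp add: algebra_simps)
  finally show ?case .
qed

lemma spow_idem: "mul S e e = e \<Longrightarrow> spow S e t = e"
  by (induction t) simp_all

lemma spow_shift_period:
  assumes "spow S s (j + k) = spow S s j" "j \<le> i"
  shows "spow S s (i + k) = spow S s i"
  using assms(2) by (induction i rule: dec_induct) (simp_all add: assms(1))

lemma spow_multiple_period:
  assumes "spow S s (j + k) = spow S s j" "j \<le> i"
  shows "spow S s (i + t * k) = spow S s i"
proof (induction t)
  case 0
  then show ?case by simp
next
  case (Suc t)
  have "spow S s (i + t * k + k) = spow S s (i + t * k)"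
    using spow_shift_period[OF assms(1)] assms(2) by simp
  with Suc show ?case by (simp add: algebra_simps)
qed

subsection \<open>The idempotent power\<close>

lemma ex_idempotent_spow:
  assumes "fsg S" "s \<in> carr S"
  shows "\<exists>c. mul S (spow S s c) (spow S s c) = spow S s c"
proof -
  have "finite (range (spow S s))"
    using assms(1) spow_in_carr[OF assms] finite_subset[of "range (spow S s)" "carr S"]
    by (auto simp: fsg_def)
  then have "\<not> inj (spow S s)"
    using finite_imageD[of "spow S s" UNIV] by auto
  then obtain a b where "a < b" "spow S s a = spow S s b"
    unfolding inj_def by (metis linorder_neqE_nat)
  then obtain p where p: "p \<ge> 1" "spow S s (a + p) = spow S s a"
    by (metis le_add_diff_inverse less_imp_le_nat zero_less_diff less_one not_le)
  define c where "c = (a + 1) * p - 1"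
  have c: "c + 1 = (a + 1) * p" "a \<le> c"
    using mult_le_mono2[OF p(1), of "a + 1"] by (auto simp: c_def)
  have "mul S (spow S s c) (spow S s c) = spow S s (c + (a + 1) * p)"
    using spow_add[OF assms] c(1) by (metis add.assoc)
  also have "\<dots> = spow S s c"
    using spow_multiple_period[OF p(2) c(2)] .
  finally show ?thesis by blast
qed

text \<open>Two idempotent powers \<open>e = s\<^sup>a\<^sup>+\<^sup>1\<close>, \<open>f = s\<^sup>b\<^sup>+\<^sup>1\<close> coincide since \<open>e = e\<^sup>b\<^sup>+\<^sup>1 = f\<^sup>a\<^sup>+\<^sup>1 = f\<close>.\<close>

lemma idempotent_spow_unique:
  assumes "fsg S" "s \<in> carr S"
    and "mul S (spow S s a) (spow S s a) = spow S s a"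
    and "mul S (spow S s b) (spow S s b) = spow S s b"
  shows "spow S s a = spow S s b"
proof -
  have "spow S s a = spow S (spow S s a) b"
    using spow_idem[OF assms(3)] by simp
  also have "\<dots> = spow S (spow S s b) a"
    using spow_spow[OF assms(1,2)] by (simp add: algebra_simps)
  also have "\<dots> = spow S s b"
    using spow_idem[OF assms(4)] by simp
  finally show ?thesis .
qed

lemma omega_pow_eq:
  assumes "fsg S" "s \<in> carr S" "mul S (spow S s c) (spow S s c) = spow S s c"
  shows "omega_pow S s = spow S s c"
  unfolding omega_pow_def
proof (rule the_equality)
  show "mul S (spow S s c) (spow S s c) = spow S s c \<and> (\<exists>k\<ge>1. spow S s c = pow S s k)"
    using assms(3) by (auto simp: pow_def intro!: exI[of _ "c + 1"])
next
  fix e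
  assume "mul S e e = e \<and> (\<exists>k\<ge>1. e = pow S s k)"
  then obtain k where "mul S e e = e" "e = spow S s k"
    by (auto simp: pow_def)
  then show "e = spow S s c"
    using idempotent_spow_unique[OF assms(1,2) _ assms(3)] by blast
qed

subsection \<open>Recurring powers\<close>

text \<open>\<open>power_recurs S s j\<close>: the power \<open>s\<^sup>j\<^sup>+\<^sup>1\<close> (not \<open>s\<^sup>j\<close>, as \<open>spow\<close> is shifted by one)
lies in the cyclic part of \<open>\<langle>s\<rangle>\<close>.\<close>

definition power_recurs :: "sgr \<Rightarrow> nat \<Rightarrow> nat \<Rightarrow> bool" where
  "power_recurs S s j \<longleftrightarrow> (\<exists>k\<ge>1. spow S s (j + k) = spow S s j)"

definition pv_power_recurs :: "nat \<Rightarrow> sgr set" where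
  "pv_power_recurs j = {S. fsg S \<and> (\<forall>s\<in>carr S. power_recurs S s j)}"

lemma omega_pow_mul_spow_iff:
  assumes "fsg S" "s \<in> carr S"
  shows "mul S (omega_pow S s) (spow S s j) = spow S s j \<longleftrightarrow> power_recurs S s j"
proof -
  obtain c where c: "mul S (spow S s c) (spow S s c) = spow S s c"
    using ex_idempotent_spow[OF assms] by blast
  have omega: "mul S (omega_pow S s) (spow S s j) = spow S s (j + (c + 1))"
    using omega_pow_eq[OF assms c] spow_add[OF assms] by (simp add: algebra_simps)
  show ?thesis
  proof
    assume "mul S (omega_pow S s) (spow S s j) = spow S s j"
    with omega show "power_recurs S s j"
      unfolding power_recurs_def by (intro exI[of _ "c + 1"]) simp
  next
    assume "power_recurs S s j"
    then obtain k where k: "k \<ge> 1" "spow S s (j + k) = spow S s j"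
      unfolding power_recurs_def by blast
    have "spow S s c = spow S (spow S s c) (k - 1)"
      using spow_idem[OF c] by simp
    also have "\<dots> = spow S s ((c + 1) * k - 1)"
      using spow_spow[OF assms, of c "k - 1"] k(1) by simp
    finally have "omega_pow S s = spow S s ((c + 1) * k - 1)"
      using omega_pow_eq[OF assms c] by simp
    then have "mul S (omega_pow S s) (spow S s j) = spow S s ((c + 1) * k - 1 + j + 1)"
      using spow_add[OF assms] by simp
    also have "(c + 1) * k - 1 + j + 1 = j + (c + 1) * k"
      using k(1) by simp
    also have "spow S s (j + (c + 1) * k) = spow S s j"
      using spow_multiple_period[OF k(2) order_refl] .
    finally show "mul S (omega_pow S s) (spow S s j) = spow S s j" .
  qed
qed

lemma pv_omega_plus_eq_pv_power_recurs:
  "m \<ge> 1 \<Longrightarrow> pv_omega_plus m = pv_power_recurs (m - 1)"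
  unfolding pv_omega_plus_def pv_power_recurs_def pow_def
  using omega_pow_mul_spow_iff by auto

lemma carr_dprod: "carr (dprod S T) = (\<lambda>(a, b). prod_encode (a, b)) ` (carr S \<times> carr T)"
  by (simp add: dprod_def carr_def)

lemma mul_dprod:
  "mul (dprod S T) (prod_encode (a, b)) (prod_encode (c, d)) = prod_encode (mul S a c, mul T b d)"
  by (simp add: dprod_def mul_def prod_encode_inverse)

lemma fsg_dprod: "fsg S \<Longrightarrow> fsg T \<Longrightarrow> fsg (dprod S T)"
  unfolding fsg_def by (auto simp: carr_dprod mul_dprod)

lemma spow_dprod: "spow (dprod S T) (prod_encode (a, b)) k = prod_encode (spow S a k, spow T b k)"
  by (induction k) (simp_all add: mul_dprod)

lemma spow_subsgr:
  assumes "subsgr T S" "s \<in> carr T"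
  shows "spow T s k = spow S s k"
proof (induction k)
  case 0
  then show ?case by simp
next
  case (Suc k)
  have "spow T s k \<in> carr T"
    using spow_in_carr assms by (auto simp: subsgr_def)
  with Suc assms show ?case by (auto simp: subsgr_def)
qed

lemma spow_hom:
  assumes "fsg S" "s \<in> carr S"
    and "\<forall>x\<in>carr S. \<forall>y\<in>carr S. h (mul S x y) = mul T (h x) (h y)"
  shows "h (spow S s k) = spow T (h s) k"
  by (induction k) (use assms spow_in_carr[OF assms(1,2)] in simp_all)

lemma power_recurs_multiple:
  "power_recurs S s j \<Longrightarrow> \<exists>k\<ge>1. \<forall>t\<ge>1. spow S s (j + t * k) = spow S s j"
  unfolding power_recurs_def using spow_multiple_period[OF _ order_refl] by blast

lemma power_recurs_dprod:
  assumes "power_recurs S a j" "power_recurs T b j"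
  shows "power_recurs (dprod S T) (prod_encode (a, b)) j"
proof -
  obtain k1 where k1: "k1 \<ge> 1" "\<forall>t\<ge>1. spow S a (j + t * k1) = spow S a j"
    using power_recurs_multiple[OF assms(1)] by blast
  obtain k2 where k2: "k2 \<ge> 1" "\<forall>t\<ge>1. spow T b (j + t * k2) = spow T b j"
    using power_recurs_multiple[OF assms(2)] by blast
  have "spow S a (j + k2 * k1) = spow S a j" "spow T b (j + k1 * k2) = spow T b j"
    using k1 k2 by simp_all
  then have "spow (dprod S T) (prod_encode (a, b)) (j + k1 * k2)
      = spow (dprod S T) (prod_encode (a, b)) j"
    by (simp add: spow_dprod mult.commute)
  moreover have "k1 * k2 \<ge> 1"
    using k1(1) k2(1) by simp
  ultimately show ?thesis
    unfolding power_recurs_def by blast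
qed

lemma pseudovariety_pv_power_recurs: "pseudovariety (pv_power_recurs j)"
  unfolding pseudovariety_def
proof (intro conjI ballI allI impI)
  show "pv_power_recurs j \<subseteq> {S. fsg S}"
    by (auto simp: pv_power_recurs_def)
  have "spow trivial_sgr 0 k = 0" for k
    by (induction k) (simp_all add: trivial_sgr_def mul_def)
  then show "trivial_sgr \<in> pv_power_recurs j"
    by (auto simp: pv_power_recurs_def power_recurs_def fsg_def trivial_sgr_def carr_def mul_def)
next
  fix S T
  assume S: "S \<in> pv_power_recurs j" and T: "T \<in> pv_power_recurs j"
  have "power_recurs (dprod S T) p j" if p: "p \<in> carr (dprod S T)" for p
  proof -
    obtain a b where "a \<in> carr S" "b \<in> carr T" "p = prod_encode (a, b)"
      using p by (auto simp: carr_dprod)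
    with S T show ?thesis
      by (simp add: pv_power_recurs_def power_recurs_dprod)
  qed
  moreover have "fsg (dprod S T)"
    using S T by (simp add: pv_power_recurs_def fsg_dprod)
  ultimately show "dprod S T \<in> pv_power_recurs j"
    by (simp add: pv_power_recurs_def)
next
  fix S T
  assume S: "S \<in> pv_power_recurs j" and T: "subsgr T S"
  have "power_recurs T s j" if "s \<in> carr T" for s
  proof -
    have "s \<in> carr S"
      using T that by (auto simp: subsgr_def)
    with S have "power_recurs S s j"
      by (simp add: pv_power_recurs_def)
    then show ?thesis
      using spow_subsgr[OF T that] by (simp add: power_recurs_def)
  qed
  moreover have "fsg T"
    using T by (simp add: subsgr_def)
  ultimately show "T \<in> pv_power_recurs j"
    by (simp add: pv_power_recurs_def)
next
  fix S T
  assume S: "S \<in> pv_power_recurs j" and T: "hom_image T S"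
  then obtain h where h: "h ` carr S = carr T"
    "\<forall>x\<in>carr S. \<forall>y\<in>carr S. h (mul S x y) = mul T (h x) (h y)"
    by (auto simp: hom_image_def)
  have "power_recurs T t j" if "t \<in> carr T" for t
  proof -
    obtain s where s: "s \<in> carr S" "t = h s"
      using h(1) \<open>t \<in> carr T\<close> by blast
    have "fsg S" "power_recurs S s j"
      using S s(1) by (auto simp: pv_power_recurs_def)
    then obtain k where "k \<ge> 1" "spow S s (j + k) = spow S s j"
      unfolding power_recurs_def by blast
    then show ?thesis
      using spow_hom[OF \<open>fsg S\<close> s(1) h(2)] s(2) unfolding power_recurs_def by metis
  qed
  moreover have "fsg T"
    using T by (simp add: hom_image_def)
  ultimately show "T \<in> pv_power_recurs j"
    by (simp add: pv_power_recurs_def)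
qed

lemma gen_pv_least: "pseudovariety V \<Longrightarrow> S \<in> V \<Longrightarrow> gen_pv S \<subseteq> V"
  by (auto simp: gen_pv_def)

lemma in_gen_pv_self: "S \<in> gen_pv S"
  by (simp add: gen_pv_def)

lemma join_irreducible_gen_pv:
  assumes "pseudovariety (Excl S)"
  shows "join_irreducible (gen_pv S)"
  unfolding join_irreducible_def
proof (intro allI impI)
  fix X
  assume X: "\<forall>W\<in>X. pseudovariety W" and S_join: "gen_pv S \<subseteq> join_pv X"
  show "\<exists>W\<in>X. gen_pv S \<subseteq> W"
  proof (rule ccontr)
    assume "\<not> (\<exists>W\<in>X. gen_pv S \<subseteq> W)"
    then have S_notin: "S \<notin> W" if "W \<in> X" for W
      using gen_pv_least X that by blast
    have "\<Union> X \<subseteq> Excl S"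
    proof
      fix T
      assume "T \<in> \<Union> X"
      then obtain W where "W \<in> X" "T \<in> W"
        by blast
      then have W: "pseudovariety W"
        using X by blast
      have "S \<notin> gen_pv T"
        using gen_pv_least[OF W \<open>T \<in> W\<close>] S_notin[OF \<open>W \<in> X\<close>] by blast
      moreover have "fsg T"
        using W \<open>T \<in> W\<close> by (auto simp: pseudovariety_def)
      ultimately show "T \<in> Excl S"
        by (simp add: Excl_def)
    qed
    then have "join_pv X \<subseteq> Excl S"
      using assms unfolding join_pv_def by blast
    then have "S \<in> Excl S"
      using S_join in_gen_pv_self by blast
    then show False
      using in_gen_pv_self by (simp add: Excl_def)
  qed
qed

subsection \<open>The semigroup \<open>N\<^sub>n\<close>\<close>

lemma fsg_N: "n \<ge> 2 \<Longrightarrow> fsg (N n)"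
  unfolding fsg_def N_def carr_def mul_def by auto

lemma mul_N: "mul (N n) i j = (if i = 0 \<or> j = 0 \<or> i + j \<ge> n then 0 else i + j)"
  by (simp add: N_def mul_def)

lemma spow_N_generator: "n \<ge> 2 \<Longrightarrow> spow (N n) 1 i = (if i + 1 < n then i + 1 else 0)"
  by (induction i) (auto simp: N_def mul_def)

lemma N_notin_pv_power_recurs:
  assumes "n \<ge> 2"
  shows "N n \<notin> pv_power_recurs (n - 2)"
proof -
  have "spow (N n) 1 (n - 2 + k) \<noteq> spow (N n) 1 (n - 2)" if "k \<ge> 1" for k
    using that assms spow_N_generator[OF assms, of "n - 2 + k"] spow_N_generator[OF assms, of "n - 2"]
    by simp
  moreover have "1 \<in> carr (N n)"
    using assms by (simp add: N_def carr_def)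
  ultimately show ?thesis
    by (auto simp: pv_power_recurs_def power_recurs_def)
qed

definition monogenic :: "sgr \<Rightarrow> nat \<Rightarrow> sgr" where
  "monogenic T s = (range (spow T s), mul T)"

lemma carr_monogenic: "carr (monogenic T s) = range (spow T s)"
  by (simp add: monogenic_def carr_def)

lemma mul_monogenic: "mul (monogenic T s) = mul T"
  by (simp add: monogenic_def mul_def)

lemma subsgr_monogenic:
  assumes "fsg T" "s \<in> carr T"
  shows "subsgr (monogenic T s) T"
proof -
  have sub: "carr (monogenic T s) \<subseteq> carr T"
    using spow_in_carr[OF assms] by (auto simp: carr_monogenic)
  have "fsg (monogenic T s)"
    unfolding fsg_def mul_monogenic
  proof (intro conjI)
    show "finite (carr (monogenic T s))"
      using sub assms(1) finite_subset by (auto simp: fsg_def)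
    show "carr (monogenic T s) \<noteq> {}"
      by (simp add: carr_monogenic)
    show "\<forall>x\<in>carr (monogenic T s). \<forall>y\<in>carr (monogenic T s). mul T x y \<in> carr (monogenic T s)"
      by (auto simp: carr_monogenic spow_add[OF assms] simp del: spow.simps)
    show "\<forall>x\<in>carr (monogenic T s). \<forall>y\<in>carr (monogenic T s). \<forall>z\<in>carr (monogenic T s).
        mul T (mul T x y) z = mul T x (mul T y z)"
      using sub assms(1) unfolding fsg_def by blast
  qed
  with sub show ?thesis
    by (simp add: subsgr_def mul_monogenic)
qed

lemma spow_inj_if_not_power_recurs:
  assumes "\<not> power_recurs T s j" "a \<le> j" "spow T s a = spow T s b"
  shows "a = b"
proof -
  have False if "x < y" "x \<le> j" "spow T s x = spow T s y" for x y
  proof -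
    have "spow T s (x + (y - x)) = spow T s x"
      using that by simp
    then have "spow T s (j + (y - x)) = spow T s j"
      using spow_shift_period that(2) by blast
    moreover have "y - x \<ge> 1"
      using that(1) by simp
    ultimately show False
      using assms(1) unfolding power_recurs_def by blast
  qed
  then show ?thesis
    using assms(2,3) by (metis le_trans less_imp_le_nat linorder_neqE_nat)
qed

text \<open>The Rees quotient: \<open>s\<^sup>k\<^sup>+\<^sup>1 \<mapsto> a\<^sup>k\<^sup>+\<^sup>1\<close> for \<open>k \<le> j = n - 2\<close>, all other powers \<open>\<mapsto> 0\<close>.\<close>

lemma hom_image_N_monogenic:
  assumes n: "n \<ge> 2" and T: "fsg T" "s \<in> carr T"
    and not_recurs: "\<not> power_recurs T s (n - 2)"
  shows "hom_image (N n) (monogenic T s)"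
proof -
  define j where "j = n - 2"
  have inj: "inj_on (spow T s) {..j}"
    using spow_inj_if_not_power_recurs[OF not_recurs] by (auto simp: inj_on_def j_def)
  define h where "h x = (if x \<in> spow T s ` {..j} then Suc (the_inv_into {..j} (spow T s) x) else 0)"
    for x
  have h_spow: "h (spow T s k) = (if k \<le> j then Suc k else 0)" for k
  proof (cases "k \<le> j")
    case True
    then show ?thesis
      using the_inv_into_f_f[OF inj] by (simp add: h_def)
  next
    case False
    have "spow T s k \<notin> spow T s ` {..j}"
    proof
      assume "spow T s k \<in> spow T s ` {..j}"
      then obtain i where "i \<le> j" "spow T s i = spow T s k"
        by auto
      then show False
        using spow_inj_if_not_power_recurs[OF not_recurs] False by (auto simp: j_def)
    qed
    with False show ?thesis
      by (simp add: h_def)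
  qed
  have "h ` range (spow T s) = {0..<n}"
  proof
    show "h ` range (spow T s) \<subseteq> {0..<n}"
      using n h_spow by (auto simp: j_def)
    have "x \<in> h ` range (spow T s)" if "x < n" for x
    proof (cases x)
      case 0
      then have "h (spow T s (Suc j)) = x"
        using h_spow[of "Suc j"] by simp
      then show ?thesis
        by blast
    next
      case (Suc k)
      then have "h (spow T s k) = x"
        using that h_spow[of k] by (simp add: j_def)
      then show ?thesis
        by blast
    qed
    then show "{0..<n} \<subseteq> h ` range (spow T s)"
      by auto
  qed
  moreover have "h (mul T (spow T s a) (spow T s b)) = mul (N n) (h (spow T s a)) (h (spow T s b))"
    for a b
  proof -
    have "h (mul T (spow T s a) (spow T s b)) = (if a + b + 1 \<le> j then Suc (a + b + 1) else 0)"
      using h_spow by (simp add: spow_add[OF T] del: spow.simps)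
    then show ?thesis
      using n by (auto simp: h_spow j_def mul_N)
  qed
  ultimately show ?thesis
    unfolding hom_image_def carr_monogenic mul_monogenic using fsg_N[OF n]
    by (auto simp: N_def carr_def)
qed

lemma N_in_gen_pv_if_not_power_recurs:
  assumes "n \<ge> 2" "fsg T" "s \<in> carr T" "\<not> power_recurs T s (n - 2)"
  shows "N n \<in> gen_pv T"
  using subsgr_monogenic[OF assms(2,3)] hom_image_N_monogenic[OF assms]
  unfolding gen_pv_def pseudovariety_def by blast

lemma Excl_N:
  assumes "n \<ge> 2"
  shows "Excl (N n) = pv_power_recurs (n - 2)"
proof
  show "Excl (N n) \<subseteq> pv_power_recurs (n - 2)"
    using N_in_gen_pv_if_not_power_recurs[OF assms] by (auto simp: Excl_def pv_power_recurs_def)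
  show "pv_power_recurs (n - 2) \<subseteq> Excl (N n)"
  proof
    fix T
    assume T: "T \<in> pv_power_recurs (n - 2)"
    then have "N n \<notin> gen_pv T"
      using gen_pv_least[OF pseudovariety_pv_power_recurs] N_notin_pv_power_recurs[OF assms]
      by blast
    with T show "T \<in> Excl (N n)"
      by (simp add: Excl_def pv_power_recurs_def)
  qed
qed

theorem theorem5p7:
  fixes n :: nat
  assumes "n \<ge> 2"
  shows "join_irreducible (gen_pv (N n)) \<and> Excl (N n) = pv_omega_plus (n - 1)"
proof
  show "join_irreducible (gen_pv (N n))"
    using join_irreducible_gen_pv Excl_N[OF assms] pseudovariety_pv_power_recurs by metis
  have "n - 1 - 1 = n - 2"
    by simp
  then show "Excl (N n) = pv_omega_plus (n - 1)"
    using Excl_N[OF assms] pv_omega_plus_eq_pv_power_recurs[of "n - 1"] assms by simp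
qed

end
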